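(* Assume $\ker(K)\cap\ker(D)=\{0\}$ and fix $\delta\ge0$ and data $y^\delta$. Let $\{\Psi_k\}_{k\in\mathbb{N}}$ be a sequence of reconstructors and $\Psi^*$ a reconstructor such that $\sup_{y\in\mathcal{Y}^\delta}\|\,|D\Psi_k(y)|-|D\Psi^*(y)|\,\|_1\to0$ as $k\to\infty$, where $\mathcal{Y}^\delta=\{y\in\mathbb{R}^m:\inf_{x\in\mathcal{X}}\|Kx-y\|_2\le\delta\}$. For each $k$ let $x^*_{\Psi_k,\delta}$ be the unique minimizer over $\mathcal{X}$ of $\mathcal{J}_{\Psi_k,\delta}(x)=\|Kx-y^\delta\|_2^2+\lambda\|w(\Psi_k(y^\delta))\odot|Dx|\|_1$, and let $x^*_{\Psi^*,\delta}$ denote the unique minimizer over $\mathcal{X}$ of $\mathcal{J}_{\Psi^*,\delta}(x)=\|Kx-y^\delta\|_2^2+\lambda\|w(\Psi^*(y^\delta))\odot|Dx|\|_1$. Then $\{x^*_{\Psi_k,\delta}\}_{k\in\mathbb{N}}$ has a convergent subsequence whose limit is $x^*_{\Psi^*,\delta}$.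
   Context: Let $K\in\mathbb{R}^{m\times n}$ with $m\le n$, and let $D_h,D_v\in\mathbb{R}^{n\times n}$ be the discrete horizontal and vertical difference operators; $Dx=\begin{bmatrix}D_hx\\ D_vx\end{bmatrix}\in\mathbb{R}^{2n}$, and $|Dx|\in\mathbb{R}^n$, $(|Dx|)_i=\sqrt{(D_hx)_i^2+(D_vx)_i^2}$. $\mathcal{X}=\{x\in\mathbb{R}^n: x_i\ge 0\ \forall i\}$. Fix $\lambda>0$, $\eta>0$, $p\in(0,1)$, and for $\tilde x\in\mathbb{R}^n$ define $(w(\tilde{x}))_i=\big(\eta/\sqrt{\eta^2+(|D\tilde{x}|)_i^2}\big)^{1-p}$. A reconstructor is a Lipschitz continuous map $\Psi:\mathbb{R}^m\to\mathbb{R}^n$. The data is $y^\delta=Kx^{GT}+e$ with $x^{GT}\in\mathcal{X}$ and $\|e\|_2\le\delta$. $\odot$ is the entrywise product. *)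

theory Defs
  imports "HOL-Analysis.Analysis"
begin

definition absD :: "real^'n^'n \<Rightarrow> real^'n^'n \<Rightarrow> real^'n \<Rightarrow> real^'n" where
  "absD Dh Dv x = (\<chi> i. sqrt (((Dh *v x) $ i)\<^sup>2 + ((Dv *v x) $ i)\<^sup>2))"

definition weight :: "real \<Rightarrow> real \<Rightarrow> real^'n^'n \<Rightarrow> real^'n^'n \<Rightarrow> real^'n \<Rightarrow> real^'n" where
  "weight eta p Dh Dv xt =
     (\<chi> i. (eta / sqrt (eta\<^sup>2 + ((absD Dh Dv xt) $ i)\<^sup>2)) powr (1 - p))"

definition norm1 :: "real^'n \<Rightarrow> real" where
  "norm1 v = (\<Sum>i\<in>UNIV. \<bar>v $ i\<bar>)"

definition nonneg_set :: "(real^'n) set" where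
  "nonneg_set = {x. \<forall>i. x $ i \<ge> 0}"

definition reconstructor :: "(real^'m \<Rightarrow> real^'n) \<Rightarrow> bool" where
  "reconstructor Psi \<longleftrightarrow> (\<exists>L. lipschitz_on L UNIV Psi)"

definition Ydelta :: "real^'n^'m \<Rightarrow> real \<Rightarrow> (real^'m) set" where
  "Ydelta K delta = {y. (INF x\<in>nonneg_set. norm (K *v x - y)) \<le> delta}"

definition Jfun :: "real^'n^'m \<Rightarrow> real^'n^'n \<Rightarrow> real^'n^'n \<Rightarrow> real \<Rightarrow> real \<Rightarrow> real
    \<Rightarrow> (real^'m \<Rightarrow> real^'n) \<Rightarrow> real^'m \<Rightarrow> real^'n \<Rightarrow> real" where
  "Jfun K Dh Dv lam eta p Psi ydel x =
     (norm (K *v x - ydel))\<^sup>2 + lam * norm1 (weight eta p Dh Dv (Psi ydel) * absD Dh Dv x)"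

definition unique_minimizer :: "('a \<Rightarrow> real) \<Rightarrow> 'a set \<Rightarrow> 'a \<Rightarrow> bool" where
  "unique_minimizer f S x \<longleftrightarrow> x \<in> S \<and> (\<forall>z\<in>S. f x \<le> f z) \<and>
     (\<forall>z\<in>S. (\<forall>u\<in>S. f z \<le> f u) \<longrightarrow> z = x)"

end

theory Submission
  imports Defs
begin

(*
  Since y\<^sup>\<delta> \<in> Y\<^sup>\<delta>, the gradient magnitudes |D\<Psi>\<^sub>k(y\<^sup>\<delta>)| converge to |D\<Psi>\<^sup>*(y\<^sup>\<delta>)|; the weights
  depend continuously on them, so they converge as well and, the gradients being bounded, stay
  above a fixed c > 0. Comparing the objective at x\<^sub>k with its value at x = 0 then bounds
  \<parallel>Kx\<^sub>k\<parallel> and \<parallel>|Dx\<^sub>k|\<parallel>\<^sub>1, and since ker K \<inter> ker D = {0} the minimizers x\<^sub>k are bounded.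
  By Bolzano-Weierstrass a subsequence converges; as the objective is jointly continuous in the
  weights and the argument, its limit minimizes the limit objective, hence is the minimizer for
  \<Psi>\<^sup>* by uniqueness.
*)

lemma tendsto_matrix_vector_mult [tendsto_intros]:
  fixes M :: "real^'n^'m"
  shows "(f \<longlongrightarrow> a) F \<Longrightarrow> ((\<lambda>k. M *v f k) \<longlongrightarrow> M *v a) F"
  by (rule bounded_linear.tendsto[OF matrix_vector_mul_bounded_linear])

lemma norm1_nonneg: "0 \<le> norm1 v"
  by (simp add: norm1_def sum_nonneg)

lemma norm_le_norm1: "norm v \<le> norm1 v"
  unfolding norm1_def by (rule norm_le_l1_cart)

lemma tendsto_of_uniform_norm1_convergence:
  assumes "\<forall>\<epsilon>>0. \<forall>\<^sub>F k in sequentially. \<forall>y\<in>Y. norm1 (f k y - g y) \<le> \<epsilon>"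
    and "y \<in> Y"
  shows "(\<lambda>k. f k y) \<longlonglongrightarrow> g y"
  unfolding tendsto_iff
proof (intro allI impI)
  fix \<epsilon> :: real
  assume "\<epsilon> > 0"
  then have "\<forall>\<^sub>F k in sequentially. norm1 (f k y - g y) \<le> \<epsilon> / 2"
    using assms(1)[rule_format, of "\<epsilon> / 2"] assms(2) by (auto elim!: eventually_mono)
  then show "\<forall>\<^sub>F k in sequentially. dist (f k y) (g y) < \<epsilon>"
  proof eventually_elim
    case (elim k)
    then show ?case
      using norm_le_norm1[of "f k y - g y"] \<open>\<epsilon> > 0\<close> by (simp add: dist_norm)
  qed
qed

lemma absD_nonneg: "0 \<le> absD Dh Dv x $ i"
  by (simp add: absD_def)

lemma absD_zero: "absD Dh Dv 0 = 0"
  by (simp add: absD_def vec_eq_iff)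

lemma abs_Dh_le_absD: "\<bar>(Dh *v x) $ i\<bar> \<le> absD Dh Dv x $ i"
  by (simp add: absD_def real_le_rsqrt)

lemma abs_Dv_le_absD: "\<bar>(Dv *v x) $ i\<bar> \<le> absD Dh Dv x $ i"
  by (simp add: absD_def real_le_rsqrt)

lemma norm_Dh_le_norm1_absD: "norm (Dh *v x) \<le> norm1 (absD Dh Dv x)"
  using norm_le_l1_cart[of "Dh *v x"] sum_mono[of UNIV "\<lambda>i. \<bar>(Dh *v x) $ i\<bar>" "\<lambda>i. absD Dh Dv x $ i"]
  by (simp add: norm1_def abs_Dh_le_absD absD_nonneg)

lemma norm_Dv_le_norm1_absD: "norm (Dv *v x) \<le> norm1 (absD Dh Dv x)"
  using norm_le_l1_cart[of "Dv *v x"] sum_mono[of UNIV "\<lambda>i. \<bar>(Dv *v x) $ i\<bar>" "\<lambda>i. absD Dh Dv x $ i"]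
  by (simp add: norm1_def abs_Dv_le_absD absD_nonneg)

lemma tendsto_absD [tendsto_intros]:
  "(f \<longlongrightarrow> a) F \<Longrightarrow> ((\<lambda>k. absD Dh Dv (f k)) \<longlongrightarrow> absD Dh Dv a) F"
  unfolding absD_def by (intro tendsto_intros)

definition weight_profile :: "real \<Rightarrow> real \<Rightarrow> real \<Rightarrow> real" where
  "weight_profile eta p t = (eta / sqrt (eta\<^sup>2 + t\<^sup>2)) powr (1 - p)"

lemma weight_component: "weight eta p Dh Dv xt $ i = weight_profile eta p (absD Dh Dv xt $ i)"
  by (simp add: weight_def weight_profile_def)

lemma sqrt_eta_sum_pos: "eta > 0 \<Longrightarrow> 0 < sqrt (eta\<^sup>2 + t\<^sup>2)"
  by (simp add: add_pos_nonneg)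

lemma weight_profile_pos: "eta > 0 \<Longrightarrow> 0 < weight_profile eta p t"
  by (simp add: weight_profile_def sqrt_eta_sum_pos)

lemma weight_profile_antimono:
  assumes "eta > 0" "p \<le> 1" "0 \<le> s" "s \<le> t"
  shows "weight_profile eta p t \<le> weight_profile eta p s"
proof -
  have "sqrt (eta\<^sup>2 + s\<^sup>2) \<le> sqrt (eta\<^sup>2 + t\<^sup>2)"
    using assms by (simp add: power_mono)
  then have "eta / sqrt (eta\<^sup>2 + t\<^sup>2) \<le> eta / sqrt (eta\<^sup>2 + s\<^sup>2)"
    using assms sqrt_eta_sum_pos by (intro divide_left_mono) auto
  then show ?thesis
    unfolding weight_profile_def using assms sqrt_eta_sum_pos[of eta t]
    by (intro powr_mono2) auto
qed

lemma tendsto_weight: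
  assumes "eta > 0" and "((\<lambda>k. absD Dh Dv (f k)) \<longlongrightarrow> absD Dh Dv a) F"
  shows "((\<lambda>k. weight eta p Dh Dv (f k)) \<longlongrightarrow> weight eta p Dh Dv a) F"
proof -
  have "((\<lambda>k. weight_profile eta p (absD Dh Dv (f k) $ i))
          \<longlongrightarrow> weight_profile eta p (absD Dh Dv a $ i)) F" for i
    unfolding weight_profile_def
    by (intro tendsto_intros assms) (use assms sqrt_eta_sum_pos in auto)
  then show ?thesis
    by (intro vec_tendstoI) (simp add: weight_component)
qed

lemma weight_ge_weight_profile_bound:
  assumes "eta > 0" "p \<le> 1" "norm (absD Dh Dv xt) \<le> B"
  shows "weight_profile eta p B \<le> weight eta p Dh Dv xt $ i"
  unfolding weight_component
  using assms component_le_norm_cart[of "absD Dh Dv xt" i]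
  by (intro weight_profile_antimono) (auto simp: absD_nonneg)

definition weighted_objective ::
    "real^'n^'m \<Rightarrow> real^'n^'n \<Rightarrow> real^'n^'n \<Rightarrow> real \<Rightarrow> real^'m \<Rightarrow> real^'n \<Rightarrow> real^'n \<Rightarrow> real" where
  "weighted_objective K Dh Dv lam ydel w x =
     (norm (K *v x - ydel))\<^sup>2 + lam * norm1 (w * absD Dh Dv x)"

lemma Jfun_eq_weighted_objective:
  "Jfun K Dh Dv lam eta p Psi ydel = weighted_objective K Dh Dv lam ydel (weight eta p Dh Dv (Psi ydel))"
  by (simp add: fun_eq_iff Jfun_def weighted_objective_def)

lemma weighted_objective_zero: "weighted_objective K Dh Dv lam ydel w 0 = (norm ydel)\<^sup>2"
  by (simp add: weighted_objective_def absD_zero norm1_def)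

lemma tendsto_weighted_objective [tendsto_intros]:
  "(w \<longlongrightarrow> w0) F \<Longrightarrow> (x \<longlongrightarrow> x0) F \<Longrightarrow>
   ((\<lambda>k. weighted_objective K Dh Dv lam ydel (w k) (x k))
      \<longlongrightarrow> weighted_objective K Dh Dv lam ydel w0 x0) F"
  unfolding weighted_objective_def norm1_def vector_mult_component
  by (intro tendsto_intros)

lemma norm1_weighted_ge:
  assumes "\<forall>i. c \<le> w $ i"
  shows "c * norm1 (absD Dh Dv x) \<le> norm1 (w * absD Dh Dv x)"
proof -
  have "c * norm1 (absD Dh Dv x) = (\<Sum>i\<in>UNIV. c * absD Dh Dv x $ i)"
    by (simp add: norm1_def sum_distrib_left absD_nonneg)
  also have "\<dots> \<le> (\<Sum>i\<in>UNIV. \<bar>w $ i * absD Dh Dv x $ i\<bar>)"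
    using assms by (intro sum_mono order_trans[OF mult_right_mono abs_ge_self]) (auto simp: absD_nonneg)
  finally show ?thesis
    by (simp add: norm1_def)
qed

lemma zero_in_nonneg_set: "0 \<in> nonneg_set"
  by (simp add: nonneg_set_def)

lemma weighted_objective_sublevel_bounds:
  assumes "lam > 0" "c > 0" "\<forall>i. c \<le> w $ i"
    and le: "weighted_objective K Dh Dv lam ydel w x \<le> (norm ydel)\<^sup>2"
  shows "norm (K *v x) \<le> 2 * norm ydel"
    and "norm1 (absD Dh Dv x) \<le> (norm ydel)\<^sup>2 / (lam * c)"
proof -
  have reg_nonneg: "0 \<le> lam * norm1 (w * absD Dh Dv x)"
    using assms(1) by (simp add: norm1_nonneg)
  then have "(norm (K *v x - ydel))\<^sup>2 \<le> (norm ydel)\<^sup>2"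
    using le unfolding weighted_objective_def by linarith
  then have "norm (K *v x - ydel) \<le> norm ydel"
    using power2_le_imp_le by fastforce
  then show "norm (K *v x) \<le> 2 * norm ydel"
    using norm_triangle_sub[of "K *v x" ydel] by simp
  have "lam * (c * norm1 (absD Dh Dv x)) \<le> lam * norm1 (w * absD Dh Dv x)"
    using assms(1,3) norm1_weighted_ge by (intro mult_left_mono) auto
  also have "\<dots> \<le> (norm ydel)\<^sup>2"
    using le zero_le_power2[of "norm (K *v x - ydel)"] unfolding weighted_objective_def by linarith
  finally show "norm1 (absD Dh Dv x) \<le> (norm ydel)\<^sup>2 / (lam * c)"
    using assms(1,2) by (simp add: pos_le_divide_eq mult.commute mult.left_commute)
qed

lemma common_kernel_trivial_imp_coercive:
  fixes K :: "real^'n^'m" and Dh :: "real^'n^'a" and Dv :: "real^'n^'b"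
  assumes "\<forall>x. K *v x = 0 \<and> Dh *v x = 0 \<and> Dv *v x = 0 \<longrightarrow> x = 0"
  obtains \<epsilon> where "\<epsilon> > 0"
    and "\<And>x. \<epsilon> * norm x \<le> norm (K *v x) + norm (Dh *v x) + norm (Dv *v x)"
proof -
  define L where "L x = (K *v x, Dh *v x, Dv *v x)" for x
  have "bounded_linear L"
    unfolding L_def by (intro bounded_linear_Pair matrix_vector_mul_bounded_linear)
  moreover have "\<forall>x\<in>UNIV. L x = 0 \<longrightarrow> x = 0"
    using assms by (simp add: L_def zero_prod_def)
  ultimately obtain \<epsilon> where "\<epsilon> > 0" and \<epsilon>: "\<forall>x\<in>UNIV. \<epsilon> * norm x \<le> norm (L x)"
    using injective_imp_isometric[OF closed_UNIV subspace_UNIV] by blast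
  have "norm (L x) \<le> norm (K *v x) + norm (Dh *v x) + norm (Dv *v x)" for x
    using norm_Pair_le[of "K *v x" "(Dh *v x, Dv *v x)"] norm_Pair_le[of "Dh *v x" "Dv *v x"]
    by (simp add: L_def)
  then show ?thesis
    using that \<open>\<epsilon> > 0\<close> \<epsilon> by (meson UNIV_I order_trans)
qed

lemma weighted_minimizers_bounded:
  fixes K :: "real^'n^'m"
  assumes ker: "\<forall>x. K *v x = 0 \<and> Dh *v x = 0 \<and> Dv *v x = 0 \<longrightarrow> x = 0"
    and "lam > 0" "c > 0" "\<And>k i. c \<le> w k $ i"
    and "\<And>k. \<forall>z\<in>nonneg_set. weighted_objective K Dh Dv lam ydel (w k) (x k)
                                \<le> weighted_objective K Dh Dv lam ydel (w k) z"
  shows "bounded (range x)"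
proof -
  have below_zero: "weighted_objective K Dh Dv lam ydel (w k) (x k) \<le> (norm ydel)\<^sup>2" for k
    using assms(5)[of k] zero_in_nonneg_set by (metis weighted_objective_zero)
  obtain \<epsilon> where "\<epsilon> > 0"
    and \<epsilon>: "\<And>x. \<epsilon> * norm x \<le> norm (K *v x) + norm (Dh *v x) + norm (Dv *v x)"
    using common_kernel_trivial_imp_coercive[OF ker] by blast
  define M where "M = (norm ydel)\<^sup>2 / (lam * c)"
  have "\<epsilon> * norm (x k) \<le> 2 * norm ydel + 2 * M" for k
    using \<epsilon>[of "x k"] weighted_objective_sublevel_bounds[OF assms(2,3) _ below_zero[of k]] assms(4)
      norm_Dh_le_norm1_absD[of Dh "x k" Dv] norm_Dv_le_norm1_absD[of Dv "x k" Dh]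
    unfolding M_def by fastforce
  then have "norm (x k) \<le> (2 * norm ydel + 2 * M) / \<epsilon>" for k
    using \<open>\<epsilon> > 0\<close> by (simp add: pos_le_divide_eq mult.commute)
  then show ?thesis
    by (intro boundedI) auto
qed

lemma closed_nonneg_set: "closed nonneg_set"
proof -
  have "nonneg_set = (\<Inter>i. {x::real^'n. x $ i \<ge> 0})"
    by (auto simp: nonneg_set_def)
  then show ?thesis
    by (metis closed_INT closed_halfspace_component_ge_cart)
qed

lemma limit_of_minimizers_is_minimizer:
  fixes f :: "nat \<Rightarrow> 'a::topological_space \<Rightarrow> real"
  assumes "closed S"
    and min: "\<And>k. x k \<in> S \<and> (\<forall>z\<in>S. f k (x k) \<le> f k z)"
    and "x \<longlonglongrightarrow> l"
    and lim_fixed: "\<And>z. z \<in> S \<Longrightarrow> (\<lambda>k. f k z) \<longlonglongrightarrow> g z"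
    and lim_diag: "(\<lambda>k. f k (x k)) \<longlonglongrightarrow> g l"
  shows "l \<in> S \<and> (\<forall>z\<in>S. g l \<le> g z)"
proof
  show "l \<in> S"
    using \<open>closed S\<close> \<open>x \<longlonglongrightarrow> l\<close> min closed_sequentially by blast
  show "\<forall>z\<in>S. g l \<le> g z"
  proof
    fix z
    assume "z \<in> S"
    show "g l \<le> g z"
      by (rule tendsto_le[OF _ lim_fixed[OF \<open>z \<in> S\<close>] lim_diag]) (use min \<open>z \<in> S\<close> in auto)
  qed
qed

lemma limit_of_weighted_minimizers:
  assumes "w \<longlonglongrightarrow> w0" "x \<longlonglongrightarrow> l"
    and "\<And>k. x k \<in> nonneg_set \<and> (\<forall>z\<in>nonneg_set. weighted_objective K Dh Dv lam ydel (w k) (x k)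
                                                \<le> weighted_objective K Dh Dv lam ydel (w k) z)"
  shows "l \<in> nonneg_set \<and> (\<forall>z\<in>nonneg_set. weighted_objective K Dh Dv lam ydel w0 l
                                         \<le> weighted_objective K Dh Dv lam ydel w0 z)"
  using closed_nonneg_set assms(3,2)
  by (rule limit_of_minimizers_is_minimizer) (intro tendsto_weighted_objective assms tendsto_const)+

lemma data_in_Ydelta:
  assumes "xGT \<in> nonneg_set" "norm e \<le> delta"
  shows "K *v xGT + e \<in> Ydelta K delta"
proof -
  have "(INF x\<in>nonneg_set. norm (K *v x - (K *v xGT + e))) \<le> delta"
    using assms by (intro cINF_lower2[where x = xGT] bdd_belowI[where m = 0]) auto
  then show ?thesis
    by (simp add: Ydelta_def)
qed

theorem corollary1:
  fixes K :: "real^'n^'m" and Dh Dv :: "real^'n^'n"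
    and lam eta p delta :: real
    and xGT :: "real^'n" and e ydel :: "real^'m"
    and Psi :: "nat \<Rightarrow> real^'m \<Rightarrow> real^'n" and PsiStar :: "real^'m \<Rightarrow> real^'n"
    and xk :: "nat \<Rightarrow> real^'n" and xstar :: "real^'n"
  assumes "CARD('m) \<le> CARD('n)"
    and "lam > 0" and "eta > 0" and "0 < p" and "p < 1"
    and ker: "\<forall>x. K *v x = 0 \<and> Dh *v x = 0 \<and> Dv *v x = 0 \<longrightarrow> x = 0"
    and "delta \<ge> 0"
    and "xGT \<in> nonneg_set" and "norm e \<le> delta" and "ydel = K *v xGT + e"
    and "\<And>k. reconstructor (Psi k)" and "reconstructor PsiStar"
    and conv: "\<forall>\<epsilon>>0. \<forall>\<^sub>F k in sequentially. \<forall>y\<in>Ydelta K delta.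
                 norm1 (absD Dh Dv (Psi k y) - absD Dh Dv (PsiStar y)) \<le> \<epsilon>"
    and "\<And>k. unique_minimizer (Jfun K Dh Dv lam eta p (Psi k) ydel) nonneg_set (xk k)"
    and "unique_minimizer (Jfun K Dh Dv lam eta p PsiStar ydel) nonneg_set xstar"
  shows "\<exists>r. strict_mono r \<and> (xk \<circ> r) \<longlonglongrightarrow> xstar"
proof -
  define w where "w k = weight eta p Dh Dv (Psi k ydel)" for k
  have absD_lim: "(\<lambda>k. absD Dh Dv (Psi k ydel)) \<longlonglongrightarrow> absD Dh Dv (PsiStar ydel)"
    using tendsto_of_uniform_norm1_convergence[OF conv] data_in_Ydelta[OF assms(8,9)] assms(10) by simp
  then obtain B where "\<forall>k. norm (absD Dh Dv (Psi k ydel)) \<le> B"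
    using convergent_imp_Bseq[OF convergentI[OF absD_lim]] by (meson BseqE)
  then have w_ge: "weight_profile eta p B \<le> w k $ i" for k i
    unfolding w_def using \<open>eta > 0\<close> \<open>p < 1\<close> by (intro weight_ge_weight_profile_bound) auto
  have min: "xk k \<in> nonneg_set \<and> (\<forall>z\<in>nonneg_set. weighted_objective K Dh Dv lam ydel (w k) (xk k)
                                             \<le> weighted_objective K Dh Dv lam ydel (w k) z)" for k
    using assms(14)[of k] by (simp add: unique_minimizer_def Jfun_eq_weighted_objective w_def)
  then have "bounded (range xk)"
    by (intro weighted_minimizers_bounded[OF ker \<open>lam > 0\<close> weight_profile_pos[OF \<open>eta > 0\<close>] w_ge])
      blast
  then obtain l r where r: "strict_mono r" and lim: "(xk \<circ> r) \<longlonglongrightarrow> l"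
    using bounded_imp_convergent_subsequence by blast
  have "(w \<circ> r) \<longlonglongrightarrow> weight eta p Dh Dv (PsiStar ydel)"
    unfolding w_def[abs_def]
    by (rule LIMSEQ_subseq_LIMSEQ[OF tendsto_weight[OF \<open>eta > 0\<close> absD_lim] r])
  then have "l = xstar"
    using limit_of_weighted_minimizers[OF _ lim, of "w \<circ> r" _ K Dh Dv lam ydel] min assms(15)
    by (simp add: unique_minimizer_def Jfun_eq_weighted_objective)
  then show ?thesis
    using r lim by blast
qed

end
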